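(* Let $\mathcal{X}\subset\mathbb{R}^d$ be a compact hyperrectangle, $\mathbf{F}=(f_1,\dots,f_M):\mathcal{X}\to\mathbb{R}^M$, and $\mathcal{X}^\star$ the Pareto set of $\mathbf{F}$ (for minimization). Let $\mathcal{S}_t$ be the set of points sampled by the algorithm MOHOLLM described in the context up to iteration $t$, and assume Assumptions (A1)–(A5) of the context hold. Let $\mathbf{r}\in\mathbb{R}^M$ be a reference point dominated by every point of $\mathbf{F}(\mathcal{X})$. Then $HV(\mathbf{F}(\mathcal{S}_t))\to HV(\mathbf{F}(\mathcal{X}^\star))$ almost surely as $t\to\infty$.
   Context: Pareto dominance: $x\prec x'$ iff $f_i(x)\le f_i(x')$ for all $i$ and $f_j(x)<f_j(x')$ for some $j$; the Pareto set is $\mathcal{X}^\star=\{x\in\mathcal{X}:\nexists x'\in\mathcal{X},\ x'\prec x\}$. Hypervolume: for $\mathcal{Y}\subset\mathbb{R}^M$, $HV(\mathcal{Y})$ is the Lebesgue measure of $\bigcup_{\mathbf{y}\in\mathcal{Y}}\{\mathbf{z}\in\mathbb{R}^M:\mathbf{y}\preceq\mathbf{z}\preceq\mathbf{r}\}$ (componentwise order). The algorithm: at each iteration $t$ it maintains a hierarchical partition of $\mathcal{X}$ (a KD-tree with axis-aligned splits), whose leaves $\{R_1,\dots,R_{K_t}\}$ are disjoint hyperrectangular regions covering $\mathcal{X}$. Each leaf $R_k$ is selected at iteration $t$ with probability $\pi_k(t)$; inside each selected leaf $R_j$, new points are generated by a sampler (an LLM) from a conditional density $p(x\mid R_j)$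 and added to the sample set $\mathcal{S}_t$. Leaves may be split over time. Assumptions: (A1) each $f_i$ is Lipschitz continuous. (A2) For any infinite sequence of nested regions $R_1\supset R_2\supset\cdots$ generated along a branch of the tree, $\lim_{t\to\infty}\mathrm{diam}(R_t)=0$. (A3) For any leaf region $R_k$ created at iteration $t_0$, $\sum_{t=t_0}^{\infty}\pi_k(t)=\infty$ almost surely. (A4) Any leaf region selected infinitely often is split infinitely often, producing child regions of strictly smaller diameter. (A5) There exists $\eta>0$ such that for any selected region $R_j$ and any measurable ball $B\subset R_j$, $\int_B p(x\mid R_j)\,dx\ge \eta\,\mathrm{vol}(B)/\mathrm{vol}(R_j)$. *)

theory Defs
  imports "HOL-Analysis.Analysis" "HOL-Probability.Probability"
begin

definition pareto_dom :: "real^'m \<Rightarrow> real^'m \<Rightarrow> bool" where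
  "pareto_dom y y' \<longleftrightarrow> (\<forall>i. y $ i \<le> y' $ i) \<and> (\<exists>j. y $ j < y' $ j)"

definition pareto_set :: "('a \<Rightarrow> real^'m) \<Rightarrow> 'a set \<Rightarrow> 'a set" where
  "pareto_set F X = {x \<in> X. \<not> (\<exists>x'\<in>X. pareto_dom (F x') (F x))}"

definition hypervolume :: "real^'m \<Rightarrow> (real^'m) set \<Rightarrow> real" where
  "hypervolume r Y = measure lebesgue
     (\<Union>y\<in>Y. {z. (\<forall>i. y $ i \<le> z $ i) \<and> (\<forall>i. z $ i \<le> r $ i)})"

definition hyperrect :: "'a::euclidean_space set \<Rightarrow> bool" where
  "hyperrect R \<longleftrightarrow> (\<exists>lo hi. R = cbox lo hi \<and> box lo hi \<noteq> {})"

end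

(* Levy's conditional Borel-Cantelli lemma turns (A3) into: almost surely every leaf has a
   selected sub-region infinitely often. It rests on the fact that, with q_s = P(A_s | G_s),
   the process 1[no A_s for s < n] * exp (q_0 + ... + q_(n-1)) has expectation at most 1,
   because (1 - q) exp q <= 1; so with probability 1 the events cannot all be avoided while
   the q_s sum to infinity.
   By (A4) a leaf that is selected infinitely often is eventually split into strictly smaller
   children covering it, so by (A2) every point of X lies in leaves of arbitrarily small
   diameter, each of which later receives a sample: the samples become dense in X.
   The region dominated by F(S_t) then increases to the region dominated by F(X), up to the
   points that are not strictly dominated by F(X). These form a Lebesgue null set, because
   their translates along (1, ..., 1) are pairwise disjoint. Finally, F(X) and the image of
   the Pareto set dominate the same region, since on a compact X every F x is weakly dominated
   by the image of a Pareto point (a minimiser of the coordinate sum below F x). *)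

theory Submission
  imports Defs
begin

lemma integral_mult_indicator_eq_cond_prob:
  fixes M G :: "'w measure" and A :: "'w set" and f q :: "'w \<Rightarrow> real"
  assumes "prob_space M" and subalg: "subalgebra M G" and A: "A \<in> sets M"
    and f_meas: "f \<in> borel_measurable G" and int_f: "integrable M f"
    and q_meas: "q \<in> borel_measurable M"
    and q_cond_exp: "AE \<omega> in M. q \<omega> = real_cond_exp M G (indicator A) \<omega>"
  shows "(\<integral>\<omega>. f \<omega> * indicator A \<omega> \<partial>M) = (\<integral>\<omega>. f \<omega> * q \<omega> \<partial>M)"
proof -
  interpret prob_space M by fact
  have "sigma_finite_subalgebra M G"
    using subalg finite_measure_axioms finite_measure_subalgebra_is_sigma_finite
    unfolding finite_measure_subalgebra_def finite_measure_subalgebra_axioms_def by blast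
  then have "(\<integral>\<omega>. f \<omega> * indicator A \<omega> \<partial>M) = (\<integral>\<omega>. f \<omega> * real_cond_exp M G (indicator A) \<omega> \<partial>M)"
    using sigma_finite_subalgebra.real_cond_exp_intg(2) integrable_real_mult_indicator[OF A int_f] f_meas A
    by (metis borel_measurable_indicator)
  also have "\<dots> = (\<integral>\<omega>. f \<omega> * q \<omega> \<partial>M)"
    using measurable_from_subalg[OF subalg f_meas] q_meas q_cond_exp borel_measurable_cond_exp2
    by (intro integral_cong_AE) (measurable, auto)
  finally show ?thesis .
qed

lemma integral_exp_cond_prob_survival_le:
  fixes M G :: "'w measure" and A :: "'w set" and g q :: "'w \<Rightarrow> real"
  assumes "prob_space M" and subalg: "subalgebra M G" and A: "A \<in> sets M"
    and g_meas: "g \<in> borel_measurable G" and g_nonneg: "\<And>\<omega>. 0 \<le> g \<omega>" and g_le: "\<And>\<omega>. g \<omega> \<le> C"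
    and q_meas: "q \<in> borel_measurable G" and q_nonneg: "\<And>\<omega>. 0 \<le> q \<omega>" and q_le_1: "\<And>\<omega>. q \<omega> \<le> 1"
    and q_cond_exp: "AE \<omega> in M. q \<omega> = real_cond_exp M G (indicator A) \<omega>"
  shows "(\<integral>\<omega>. indicator (space M - A) \<omega> * g \<omega> * exp (q \<omega>) \<partial>M) \<le> (\<integral>\<omega>. g \<omega> \<partial>M)"
proof -
  interpret prob_space M by fact
  define f where "f \<omega> = g \<omega> * exp (q \<omega>)" for \<omega>
  have f_meas: "f \<in> borel_measurable G" unfolding f_def using g_meas q_meas by measurable
  have f_M: "f \<in> borel_measurable M" and q_M: "q \<in> borel_measurable M"
    using measurable_from_subalg[OF subalg] f_meas q_meas by blast+
  have int_g: "integrable M g"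
    using measurable_from_subalg[OF subalg g_meas] g_nonneg g_le
    by (intro integrable_const_bound[where B=C]) auto
  have "\<bar>f \<omega>\<bar> \<le> C * exp 1" for \<omega>
    unfolding f_def abs_mult using g_nonneg g_le q_le_1 order_trans[OF g_nonneg g_le]
    by (intro mult_mono) auto
  then have int_f: "integrable M f" using f_M by (intro integrable_const_bound) auto
  have int_fq: "integrable M (\<lambda>\<omega>. f \<omega> * q \<omega>)"
  proof (rule Bochner_Integration.integrable_bound[OF int_f])
    show "(\<lambda>\<omega>. f \<omega> * q \<omega>) \<in> borel_measurable M" using f_M q_M by measurable
    show "AE \<omega> in M. norm (f \<omega> * q \<omega>) \<le> norm (f \<omega>)"
      using q_nonneg q_le_1 by (intro AE_I2) (simp add: abs_mult mult_left_le)
  qed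
  have "(\<integral>\<omega>. indicator (space M - A) \<omega> * g \<omega> * exp (q \<omega>) \<partial>M)
      = (\<integral>\<omega>. f \<omega> - f \<omega> * indicator A \<omega> \<partial>M)"
    by (intro Bochner_Integration.integral_cong) (auto simp: f_def indicator_def)
  also have "\<dots> = (\<integral>\<omega>. f \<omega> - f \<omega> * q \<omega> \<partial>M)"
    using integral_mult_indicator_eq_cond_prob[OF \<open>prob_space M\<close> subalg A f_meas int_f q_M q_cond_exp]
      int_f int_fq integrable_real_mult_indicator[OF A int_f] by simp
  also have "\<dots> \<le> (\<integral>\<omega>. g \<omega> \<partial>M)"
  proof (intro integral_mono)
    fix \<omega>
    have "exp (q \<omega>) * (1 - q \<omega>) \<le> exp (q \<omega>) * exp (- q \<omega>)"
      using exp_ge_add_one_self[of "- q \<omega>"] by simp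
    then show "f \<omega> - f \<omega> * q \<omega> \<le> g \<omega>"
      unfolding f_def using mult_left_mono g_nonneg by (fastforce simp: exp_minus algebra_simps)
  qed (use int_f int_fq int_g in auto)
  finally show ?thesis .
qed

locale cond_prob_sequence = prob_space M for M :: "'w measure" +
  fixes G :: "nat \<Rightarrow> 'w measure" and A :: "nat \<Rightarrow> 'w set" and q :: "nat \<Rightarrow> 'w \<Rightarrow> real"
  assumes subalg: "subalgebra M (G t)"
    and sets_G_mono: "sets (G t) \<subseteq> sets (G (Suc t))"
    and event_measurable: "A t \<in> sets (G (Suc t))"
    and q_measurable: "q t \<in> borel_measurable (G t)"
    and q_nonneg: "0 \<le> q t \<omega>" and q_le_1: "q t \<omega> \<le> 1"
    and q_cond_exp: "AE \<omega> in M. q t \<omega> = real_cond_exp M (G t) (indicator (A t)) \<omega>"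
begin

lemma A_in_events: "A t \<in> events"
  using event_measurable subalg[of "Suc t"] by (auto simp: subalgebra_def)

lemma borel_measurable_sum_q: "(\<lambda>\<omega>. \<Sum>t<n. q t \<omega>) \<in> borel_measurable M"
  using measurable_from_subalg[OF subalg q_measurable] by measurable

lemma sum_q_le: "(\<Sum>t<n. q t \<omega>) \<le> n"
  using sum_mono[of "{..<n}" "\<lambda>t. q t \<omega>" "\<lambda>_. 1"] q_le_1 by simp

lemma integral_survival_exp_sum_le_1:
  "(\<integral>\<omega>. indicator (space M - (\<Union>t<n. A t)) \<omega> * exp (\<Sum>t<n. q t \<omega>) \<partial>M) \<le> 1"
proof (induction n)
  case 0
  show ?case by (simp add: integral_indicator)
next
  case (Suc n)
  define g where "g \<omega> = indicator (space M - (\<Union>t<n. A t)) \<omega> * exp (\<Sum>t<n. q t \<omega>)" for \<omega>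
  have G_le: "sets (G s) \<subseteq> sets (G n)" if "s \<le> n" for s
    using lift_Suc_mono_le[of "\<lambda>t. sets (G t)", OF sets_G_mono that] .
  have "space (G s) = space (G n)" for s
    using subalg[of s] subalg[of n] by (simp add: subalgebra_def)
  then have meas_G: "h \<in> borel_measurable (G n)" if "h \<in> borel_measurable (G s)" "s \<le> n"
    for h :: "'w \<Rightarrow> real" and s
    using measurable_mono[OF order_refl refl G_le[OF that(2)]] that(1) by blast
  have "A t \<in> sets (G n)" if "t < n" for t
    using event_measurable[of t] G_le[of "Suc t"] that by auto
  then have "space (G n) - (\<Union>t<n. A t) \<in> sets (G n)"
    by auto
  then have "space M - (\<Union>t<n. A t) \<in> sets (G n)"
    using subalg[of n] by (simp add: subalgebra_def)
  then have g_meas: "g \<in> borel_measurable (G n)"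
    unfolding g_def using meas_G[OF q_measurable] by measurable
  have "(\<integral>\<omega>. indicator (space M - (\<Union>t<Suc n. A t)) \<omega> * exp (\<Sum>t<Suc n. q t \<omega>) \<partial>M)
      = (\<integral>\<omega>. indicator (space M - A n) \<omega> * g \<omega> * exp (q n \<omega>) \<partial>M)"
    unfolding g_def
    by (intro Bochner_Integration.integral_cong) (auto simp: indicator_def lessThan_Suc exp_add)
  also have "\<dots> \<le> (\<integral>\<omega>. g \<omega> \<partial>M)"
    using sum_q_le
    by (intro integral_exp_cond_prob_survival_le[OF prob_space_axioms subalg A_in_events g_meas
          _ _ q_measurable q_nonneg q_le_1 q_cond_exp, where C="exp n"]) (auto simp: g_def indicator_def)
  also have "\<dots> \<le> 1" using Suc.IH unfolding g_def .
  finally show ?case .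
qed

lemma prob_survival_sum_ge_le_exp:
  "prob ((space M - (\<Union>t<n. A t)) \<inter> {\<omega>\<in>space M. C \<le> (\<Sum>t<n. q t \<omega>)}) \<le> exp (- C)"
proof -
  let ?B = "space M - (\<Union>t<n. A t)" and ?E = "(space M - (\<Union>t<n. A t)) \<inter> {\<omega>\<in>space M. C \<le> (\<Sum>t<n. q t \<omega>)}"
  have B: "?B \<in> events" using A_in_events by auto
  have E: "?E \<in> events" using B borel_measurable_sum_q by measurable
  have "prob ?E * exp C = (\<integral>\<omega>. indicator ?E \<omega> * exp C \<partial>M)"
    using E by simp
  also have "\<dots> \<le> (\<integral>\<omega>. indicator ?B \<omega> * exp (\<Sum>t<n. q t \<omega>) \<partial>M)"
  proof (rule integral_mono)
    show "integrable M (\<lambda>\<omega>. indicator ?E \<omega> * exp C)"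
      using E by (intro integrable_mult_left integrable_real_indicator) (auto simp: emeasure_eq_measure)
    have "(\<lambda>\<omega>. indicator ?B \<omega> * exp (\<Sum>t<n. q t \<omega>)) \<in> borel_measurable M"
      using B borel_measurable_sum_q by measurable
    then show "integrable M (\<lambda>\<omega>. indicator ?B \<omega> * exp (\<Sum>t<n. q t \<omega>))"
      using sum_q_le by (intro integrable_const_bound[where B="exp n"]) (auto simp: indicator_def)
  qed (auto simp: indicator_def)
  also have "\<dots> \<le> 1" by (rule integral_survival_exp_sum_le_1)
  finally show ?thesis by (simp add: exp_minus field_simps)
qed

lemma prob_no_event_sum_ge_le_exp:
  "prob {\<omega>\<in>space M. (\<forall>t. \<omega> \<notin> A t) \<and> (\<exists>n. C \<le> (\<Sum>t<n. q t \<omega>))} \<le> exp (- C)"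
proof -
  define W where "W n = {\<omega>\<in>space M. (\<forall>t. \<omega> \<notin> A t) \<and> C \<le> (\<Sum>t<n. q t \<omega>)}" for n
  have sum_mono: "(\<Sum>t<m. q t \<omega>) \<le> (\<Sum>t<n. q t \<omega>)" if "m \<le> n" for m n \<omega>
    using q_nonneg that by (intro sum_mono2) auto
  have "incseq W"
    unfolding incseq_def
  proof (intro allI impI subsetI)
    fix m n \<omega> assume "m \<le> n" "\<omega> \<in> W m"
    then show "\<omega> \<in> W n" using sum_mono[OF \<open>m \<le> n\<close>, of \<omega>] unfolding W_def by auto
  qed
  moreover have "W n \<in> events" for n
    unfolding W_def using A_in_events borel_measurable_sum_q by measurable
  ultimately have "(\<lambda>n. prob (W n)) \<longlonglongrightarrow> prob (\<Union>n. W n)"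
    using finite_Lim_measure_incseq[of W] by blast
  moreover have "prob (W n) \<le> exp (- C)" for n
  proof -
    have "W n \<subseteq> (space M - (\<Union>t<n. A t)) \<inter> {\<omega>\<in>space M. C \<le> (\<Sum>t<n. q t \<omega>)}"
      unfolding W_def by blast
    moreover have "(space M - (\<Union>t<n. A t)) \<inter> {\<omega>\<in>space M. C \<le> (\<Sum>t<n. q t \<omega>)} \<in> events"
      using A_in_events borel_measurable_sum_q by measurable
    ultimately have "prob (W n) \<le> prob ((space M - (\<Union>t<n. A t)) \<inter> {\<omega>\<in>space M. C \<le> (\<Sum>t<n. q t \<omega>)})"
      by (rule finite_measure_mono)
    then show ?thesis using prob_survival_sum_ge_le_exp[of n C] by linarith
  qed
  moreover have "(\<Union>n. W n) = {\<omega>\<in>space M. (\<forall>t. \<omega> \<notin> A t) \<and> (\<exists>n. C \<le> (\<Sum>t<n. q t \<omega>))}"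
    unfolding W_def by blast
  ultimately show ?thesis by (intro LIMSEQ_le_const2) auto
qed

lemma AE_summable_if_no_event: "AE \<omega> in M. (\<forall>t. \<omega> \<notin> A t) \<longrightarrow> summable (\<lambda>t. q t \<omega>)"
proof -
  define N where "N = {\<omega>\<in>space M. (\<forall>t. \<omega> \<notin> A t) \<and> (\<forall>C::nat. \<exists>n. C \<le> (\<Sum>t<n. q t \<omega>))}"
  have N: "N \<in> events" unfolding N_def using A_in_events borel_measurable_sum_q by measurable
  have "prob N \<le> exp (- real C)" for C :: nat
  proof -
    have "N \<subseteq> {\<omega>\<in>space M. (\<forall>t. \<omega> \<notin> A t) \<and> (\<exists>n. real C \<le> (\<Sum>t<n. q t \<omega>))}"
      unfolding N_def by blast
    moreover have "{\<omega>\<in>space M. (\<forall>t. \<omega> \<notin> A t) \<and> (\<exists>n. real C \<le> (\<Sum>t<n. q t \<omega>))} \<in> events"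
      using A_in_events borel_measurable_sum_q by measurable
    ultimately have "prob N \<le> prob {\<omega>\<in>space M. (\<forall>t. \<omega> \<notin> A t) \<and> (\<exists>n. real C \<le> (\<Sum>t<n. q t \<omega>))}"
      by (rule finite_measure_mono)
    then show ?thesis using prob_no_event_sum_ge_le_exp[of "real C"] by linarith
  qed
  have "prob N = 0"
  proof (rule ccontr)
    assume "prob N \<noteq> 0"
    then have "prob N > 0" using measure_nonneg[of M N] by linarith
    obtain C :: nat where "- ln (prob N) < real C" using reals_Archimedean2 by blast
    then have "exp (- real C) < exp (ln (prob N))" by simp
    with \<open>prob N > 0\<close> \<open>prob N \<le> exp (- real C)\<close> show False by simp
  qed
  then have "AE \<omega> in M. \<omega> \<notin> N"
    using N by (intro AE_not_in) (simp add: emeasure_eq_measure null_setsI)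
  then show ?thesis
  proof (rule AE_mp, intro AE_I2 impI)
    fix \<omega> assume "\<omega> \<in> space M" "\<omega> \<notin> N" "\<forall>t. \<omega> \<notin> A t"
    then obtain C :: nat where "\<And>n. (\<Sum>t<n. q t \<omega>) \<le> C"
      unfolding N_def by (auto simp: not_le intro: less_imp_le)
    then show "summable (\<lambda>t. q t \<omega>)"
      using q_nonneg by (intro summableI_nonneg_bounded[where x="real C"])
  qed
qed

end

lemma AE_event_if_cond_prob_not_summable:
  fixes M :: "'w measure" and G :: "nat \<Rightarrow> 'w measure" and A :: "nat \<Rightarrow> 'w set"
    and p :: "nat \<Rightarrow> 'w \<Rightarrow> real"
  assumes "prob_space M"
    and subalg: "\<And>t. subalgebra M (G t)"
    and G_mono: "\<And>t. sets (G t) \<subseteq> sets (G (Suc t))"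
    and A: "\<And>t. A t \<in> sets (G (Suc t))"
    and p_meas: "\<And>t. p t \<in> borel_measurable (G t)"
    and p_cond_exp: "\<And>t. AE \<omega> in M. p t \<omega> = real_cond_exp M (G t) (indicator (A t)) \<omega>"
  shows "AE \<omega> in M. \<not> summable (\<lambda>t. p t \<omega>) \<longrightarrow> (\<exists>t. \<omega> \<in> A t)"
proof -
  interpret prob_space M by fact
  \<comment> \<open>p is a conditional probability only almost everywhere, so clip it into [0, 1].\<close>
  define q where "q t \<omega> = max 0 (min 1 (p t \<omega>))" for t \<omega>
  have A_events: "A t \<in> events" for t using A[of t] subalg[of "Suc t"] by (auto simp: subalgebra_def)
  have "AE \<omega> in M. q t \<omega> = p t \<omega>" for t
  proof -
    have sfs: "sigma_finite_subalgebra M (G t)"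
      using subalg finite_measure_axioms finite_measure_subalgebra_is_sigma_finite
      unfolding finite_measure_subalgebra_def finite_measure_subalgebra_axioms_def by blast
    have "AE \<omega> in M. 0 \<le> real_cond_exp M (G t) (indicator (A t)) \<omega>"
      using A_events by (intro sigma_finite_subalgebra.real_cond_exp_ge_c[OF sfs]) (auto simp: emeasure_eq_measure)
    moreover have "AE \<omega> in M. real_cond_exp M (G t) (indicator (A t)) \<omega> \<le> 1"
      using A_events by (intro sigma_finite_subalgebra.real_cond_exp_le_c[OF sfs])
        (auto simp: emeasure_eq_measure indicator_def)
    ultimately show ?thesis using p_cond_exp[of t] by eventually_elim (auto simp: q_def)
  qed
  then have q_eq_p: "AE \<omega> in M. \<forall>t. q t \<omega> = p t \<omega>" by (simp add: AE_all_countable)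
  interpret cond_prob_sequence M G A q
  proof
    show "q t \<in> borel_measurable (G t)" for t unfolding q_def using p_meas by measurable
    show "AE \<omega> in M. q t \<omega> = real_cond_exp M (G t) (indicator (A t)) \<omega>" for t
      using \<open>AE \<omega> in M. q t \<omega> = p t \<omega>\<close> p_cond_exp[of t] by eventually_elim simp
  qed (use subalg G_mono A in \<open>auto simp: q_def\<close>)
  show ?thesis using AE_summable_if_no_event q_eq_p by eventually_elim auto
qed

lemma AE_frequently_if_cond_prob_not_summable:
  fixes M :: "'w measure" and G :: "nat \<Rightarrow> 'w measure" and A :: "nat \<Rightarrow> 'w set"
    and p :: "nat \<Rightarrow> 'w \<Rightarrow> real"
  assumes "prob_space M"
    and subalg: "\<And>t. subalgebra M (G t)"
    and G_mono: "\<And>t. sets (G t) \<subseteq> sets (G (Suc t))"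
    and A: "\<And>t. A t \<in> sets (G (Suc t))"
    and p_meas: "\<And>t. p t \<in> borel_measurable (G t)"
    and p_cond_exp: "\<And>t. AE \<omega> in M. p t \<omega> = real_cond_exp M (G t) (indicator (A t)) \<omega>"
  shows "AE \<omega> in M. \<not> summable (\<lambda>t. p t \<omega>) \<longrightarrow> (\<exists>\<^sub>F t in sequentially. \<omega> \<in> A t)"
proof -
  have "AE \<omega> in M. \<not> summable (\<lambda>t. p t \<omega>) \<longrightarrow> (\<exists>t. \<omega> \<in> A (t + t0))" for t0
  proof -
    have "AE \<omega> in M. \<not> summable (\<lambda>t. p (t + t0) \<omega>) \<longrightarrow> (\<exists>t. \<omega> \<in> A (t + t0))"
      using assms by (intro AE_event_if_cond_prob_not_summable[where G="\<lambda>t. G (t + t0)"]) auto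
    then show ?thesis using summable_iff_shift[of "\<lambda>t. p t _" t0] by simp
  qed
  then have "AE \<omega> in M. \<forall>t0. \<not> summable (\<lambda>t. p t \<omega>) \<longrightarrow> (\<exists>t. \<omega> \<in> A (t + t0))"
    by (rule AE_all_countable[THEN iffD2, rule_format])
  then show ?thesis
    unfolding frequently_sequentially by eventually_elim (metis le_add2)
qed

lemma AE_frequently_if_cond_prob_tails_not_summable:
  fixes M :: "'w measure" and G :: "nat \<Rightarrow> 'w measure" and A :: "'k::countable \<Rightarrow> nat \<Rightarrow> 'w set"
    and p :: "'k \<Rightarrow> nat \<Rightarrow> 'w \<Rightarrow> real" and P :: "'k \<Rightarrow> nat \<Rightarrow> 'w \<Rightarrow> bool"
  assumes "prob_space M"
    and subalg: "\<And>t. subalgebra M (G t)"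
    and G_mono: "\<And>t. sets (G t) \<subseteq> sets (G (Suc t))"
    and A: "\<And>k t. A k t \<in> sets (G (Suc t))"
    and p_meas: "\<And>k t. p k t \<in> borel_measurable (G t)"
    and p_cond_exp: "\<And>k t. AE \<omega> in M. p k t \<omega> = real_cond_exp M (G t) (indicator (A k t)) \<omega>"
    and divergent: "\<And>k t0. AE \<omega> in M. P k t0 \<omega> \<longrightarrow> \<not> summable (\<lambda>t. p k (t0 + t) \<omega>)"
  shows "AE \<omega> in M. \<forall>k t0. P k t0 \<omega> \<longrightarrow> (\<exists>\<^sub>F t in sequentially. \<omega> \<in> A k t)"
proof -
  have "AE \<omega> in M. P k t0 \<omega> \<longrightarrow> (\<exists>\<^sub>F t in sequentially. \<omega> \<in> A k t)" for k t0
    using AE_frequently_if_cond_prob_not_summable[where G=G and A="A k" and p="p k",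
        OF assms(1-3) A p_meas p_cond_exp] divergent[of k t0]
  proof eventually_elim
    case (elim \<omega>)
    then show ?case using summable_iff_shift[of "\<lambda>t. p k t \<omega>" t0] by (simp add: add.commute)
  qed
  then show ?thesis
    by (intro AE_all_countable[THEN iffD2] allI)
qed

lemma continuous_on_if_lipschitz_components:
  fixes F :: "'a::metric_space \<Rightarrow> real^'m"
  assumes "\<forall>i. \<exists>C. C-lipschitz_on X (\<lambda>x. F x $ i)"
  shows "continuous_on X F"
  using assms continuous_on_vec_lambda[of X "\<lambda>i x. F x $ i"] lipschitz_on_continuous_on by auto

lemma
  assumes "hyperrect R"
  shows hyperrect_interior_nonempty: "interior R \<noteq> {}"
    and closure_interior_hyperrect: "closure (interior R) = R"
    and compact_hyperrect: "compact R"
proof -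
  obtain lo hi where "R = cbox lo hi" "box lo hi \<noteq> {}"
    using assms unfolding hyperrect_def by blast
  then show "interior R \<noteq> {}" "closure (interior R) = R" "compact R"
    by simp_all
qed

locale hyperrect_refinement =
  fixes X :: "'a::euclidean_space set" and Reg :: "nat \<Rightarrow> 'a set" and Lv :: "nat \<Rightarrow> nat set"
  assumes finite_leaves: "finite (Lv t)"
    and hyperrect_leaf: "k \<in> Lv t \<Longrightarrow> hyperrect (Reg k)"
    and leaves_cover: "(\<Union>k\<in>Lv t. Reg k) = X"
    and leaves_interiors_disjoint:
      "k \<in> Lv t \<Longrightarrow> l \<in> Lv t \<Longrightarrow> k \<noteq> l \<Longrightarrow> interior (Reg k) \<inter> interior (Reg l) = {}"
    and new_leaf_inside_split_leaf:
      "l \<in> Lv (Suc t) \<Longrightarrow> l \<in> Lv t \<or> (\<exists>k\<in>Lv t. k \<notin> Lv (Suc t) \<and> Reg l \<subseteq> Reg k)"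
begin

lemma leaf_subset: "k \<in> Lv t \<Longrightarrow> Reg k \<subseteq> X"
  using leaves_cover[of t] by blast

lemma leaf_eq_if_subset:
  assumes "j \<in> Lv t" "k \<in> Lv t" "Reg j \<subseteq> Reg k"
  shows "j = k"
  using leaves_interiors_disjoint[of j t k] interior_mono[OF assms(3)]
    hyperrect_interior_nonempty[OF hyperrect_leaf[OF assms(1)]] assms(1,2) by blast

lemma leaf_eq_if_interior_point:
  assumes "k \<in> Lv t" "l \<in> Lv t" "p \<in> interior (Reg k)" "p \<in> Reg l"
  shows "l = k"
proof (rule ccontr)
  assume "l \<noteq> k"
  have "p \<in> closure (interior (Reg l))"
    using closure_interior_hyperrect[OF hyperrect_leaf[OF assms(2)]] assms(4) by simp
  then have "interior (Reg k) \<inter> interior (Reg l) \<noteq> {}"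
    using open_Int_closure_eq_empty[OF open_interior, of "Reg k" "interior (Reg l)"] assms(3) by blast
  with leaves_interiors_disjoint[OF assms(1,2)] \<open>l \<noteq> k\<close> show False by blast
qed

lemma next_leaves_cover_leaf:
  assumes k: "k \<in> Lv t" and x: "x \<in> Reg k"
  shows "\<exists>l\<in>Lv (Suc t). Reg l \<subseteq> Reg k \<and> x \<in> Reg l"
proof -
  define C where "C = {l \<in> Lv (Suc t). Reg l \<subseteq> Reg k}"
  have "interior (Reg k) \<subseteq> (\<Union>l\<in>C. Reg l)"
  proof
    fix p assume p: "p \<in> interior (Reg k)"
    then obtain l where l: "l \<in> Lv (Suc t)" "p \<in> Reg l"
      using leaf_subset[OF k] leaves_cover[of "Suc t"] interior_subset by blast
    obtain k' where k': "k' \<in> Lv t" "Reg l \<subseteq> Reg k'"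
      using new_leaf_inside_split_leaf[OF l(1)] by blast
    then have "k' = k" using leaf_eq_if_interior_point[OF k k'(1) p] l(2) by blast
    then show "p \<in> (\<Union>l\<in>C. Reg l)" using l k' unfolding C_def by blast
  qed
  moreover have "closed (\<Union>l\<in>C. Reg l)"
    using finite_leaves[of "Suc t"] unfolding C_def
    by (intro closed_UN) (auto intro: compact_imp_closed compact_hyperrect hyperrect_leaf)
  ultimately have "closure (interior (Reg k)) \<subseteq> (\<Union>l\<in>C. Reg l)"
    by (rule closure_minimal)
  then show ?thesis using x closure_interior_hyperrect[OF hyperrect_leaf[OF k]] unfolding C_def by blast
qed

lemma leaf_eventually_removed:
  assumes k: "k \<in> Lv t"
    and split: "\<exists>\<^sub>F s in sequentially. \<exists>j\<in>Lv s. Reg j \<subseteq> Reg k \<and> j \<notin> Lv (Suc s)"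
  shows "\<exists>s. k \<in> Lv s \<and> k \<notin> Lv (Suc s)"
proof (rule ccontr)
  assume never_removed: "\<not> ?thesis"
  have stays: "k \<in> Lv s" if "t \<le> s" for s
    using that by (induction s rule: dec_induct) (use k never_removed in auto)
  obtain s j where "s \<ge> t" "j \<in> Lv s" "Reg j \<subseteq> Reg k" "j \<notin> Lv (Suc s)"
    using split unfolding frequently_sequentially by blast
  then show False
    using leaf_eq_if_subset[of j s k] stays[of s] stays[of "Suc s"] by auto
qed

lemma exists_small_leaf:
  assumes removed: "\<And>k t. k \<in> Lv t \<Longrightarrow> \<exists>s. k \<in> Lv s \<and> k \<notin> Lv (Suc s)"
    and shrink: "\<And>t j l. j \<in> Lv t \<Longrightarrow> j \<notin> Lv (Suc t) \<Longrightarrow> l \<in> Lv (Suc t) \<Longrightarrow> Reg l \<subseteq> Reg j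
      \<Longrightarrow> diameter (Reg l) < diameter (Reg j)"
    and nested_diameter_tendsto_0: "\<And>R :: nat \<Rightarrow> nat. (\<forall>n. \<exists>t. R n \<in> Lv t)
      \<Longrightarrow> (\<forall>n. Reg (R (Suc n)) \<subset> Reg (R n)) \<Longrightarrow> (\<lambda>n. diameter (Reg (R n))) \<longlonglongrightarrow> 0"
    and x: "x \<in> X" and \<epsilon>: "\<epsilon> > 0"
  shows "\<exists>k t. k \<in> Lv t \<and> x \<in> Reg k \<and> diameter (Reg k) < \<epsilon>"
proof -
  define P where "P n k \<longleftrightarrow> (\<exists>t. k \<in> Lv t) \<and> x \<in> Reg k" for n :: nat and k
  have "\<exists>k'. P (Suc n) k' \<and> Reg k' \<subset> Reg k" if "P n k" for n k
  proof -
    obtain t where "k \<in> Lv t" "x \<in> Reg k" using \<open>P n k\<close> unfolding P_def by blast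
    obtain s where s: "k \<in> Lv s" "k \<notin> Lv (Suc s)" using removed[OF \<open>k \<in> Lv t\<close>] by blast
    obtain l where "l \<in> Lv (Suc s)" "Reg l \<subseteq> Reg k" "x \<in> Reg l"
      using next_leaves_cover_leaf[OF s(1) \<open>x \<in> Reg k\<close>] by blast
    moreover from this have "Reg l \<noteq> Reg k" using shrink[OF s] by force
    ultimately show ?thesis unfolding P_def by blast
  qed
  moreover have "\<exists>k. P 0 k" using x leaves_cover[of 0] unfolding P_def by blast
  ultimately obtain R where R: "\<And>n. P n (R n)" "\<And>n. Reg (R (Suc n)) \<subset> Reg (R n)"
    using dependent_nat_choice[of P "\<lambda>_ k k'. Reg k' \<subset> Reg k"] by blast
  then have "(\<lambda>n. diameter (Reg (R n))) \<longlonglongrightarrow> 0"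
    by (intro nested_diameter_tendsto_0) (auto simp: P_def)
  then have "\<forall>\<^sub>F n in sequentially. diameter (Reg (R n)) < \<epsilon>"
    using \<epsilon> by (rule order_tendstoD(2))
  then obtain n where "diameter (Reg (R n)) < \<epsilon>"
    unfolding eventually_sequentially by blast
  then show ?thesis using R(1)[of n] unfolding P_def by blast
qed

lemma samples_dense:
  fixes Sel :: "nat \<Rightarrow> nat set" and S :: "nat \<Rightarrow> 'a set"
  assumes small_leaf: "\<And>x \<epsilon>. x \<in> X \<Longrightarrow> \<epsilon> > 0 \<Longrightarrow> \<exists>k t. k \<in> Lv t \<and> x \<in> Reg k \<and> diameter (Reg k) < \<epsilon>"
    and selected: "\<And>k t. k \<in> Lv t \<Longrightarrow> \<exists>s. \<exists>j\<in>Sel s. Reg j \<subseteq> Reg k"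
    and sampled: "\<And>t j. j \<in> Sel t \<Longrightarrow> \<exists>p\<in>S (Suc t). p \<in> Reg j"
  shows "X \<subseteq> closure (\<Union>t. S t)"
proof
  fix x assume "x \<in> X"
  show "x \<in> closure (\<Union>t. S t)"
  proof (rule closure_approachable[THEN iffD2], intro allI impI)
    fix \<epsilon> :: real assume "\<epsilon> > 0"
    obtain k t where k: "k \<in> Lv t" "x \<in> Reg k" "diameter (Reg k) < \<epsilon>"
      using small_leaf[OF \<open>x \<in> X\<close> \<open>\<epsilon> > 0\<close>] by blast
    obtain s j where "j \<in> Sel s" "Reg j \<subseteq> Reg k" using selected[OF k(1)] by blast
    then obtain p where p: "p \<in> S (Suc s)" "p \<in> Reg k" using sampled by blast
    have "dist p x \<le> diameter (Reg k)"
      using compact_hyperrect[OF hyperrect_leaf[OF k(1)]] p(2) k(2)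
      by (intro diameter_bounded_bound) (auto intro: compact_imp_bounded)
    then show "\<exists>p\<in>\<Union>t. S t. dist p x < \<epsilon>" using p(1) k(3) by force
  qed
qed

end

definition dominated_region :: "real^'m \<Rightarrow> (real^'m) set \<Rightarrow> (real^'m) set" where
  "dominated_region r Y = (\<Union>y\<in>Y. {z. (\<forall>i. y $ i \<le> z $ i) \<and> (\<forall>i. z $ i \<le> r $ i)})"

lemma hypervolume_eq_measure: "hypervolume r Y = measure lebesgue (dominated_region r Y)"
  unfolding hypervolume_def dominated_region_def ..

lemma dominated_region_mono: "Y \<subseteq> Y' \<Longrightarrow> dominated_region r Y \<subseteq> dominated_region r Y'"
  unfolding dominated_region_def by blast

lemma dominated_region_UN: "dominated_region r (\<Union>t. Y t) = (\<Union>t. dominated_region r (Y t))"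
  unfolding dominated_region_def by blast

lemma closed_dominated_region:
  fixes Y :: "(real^'m) set"
  assumes "compact Y"
  shows "closed (dominated_region r Y)"
proof -
  have "dominated_region r Y
      = (\<Union>v\<in>{v. \<forall>i. 0 \<le> v $ i}. \<Union>y\<in>Y. {v + y}) \<inter> {z. \<forall>i. z $ i \<le> r $ i}"
    unfolding dominated_region_def
  proof (intro equalityI subsetI)
    fix z assume "z \<in> (\<Union>y\<in>Y. {z. (\<forall>i. y $ i \<le> z $ i) \<and> (\<forall>i. z $ i \<le> r $ i)})"
    then obtain y where "y \<in> Y" "\<forall>i. y $ i \<le> z $ i" "\<forall>i. z $ i \<le> r $ i" by blast
    then show "z \<in> (\<Union>v\<in>{v. \<forall>i. 0 \<le> v $ i}. \<Union>y\<in>Y. {v + y}) \<inter> {z. \<forall>i. z $ i \<le> r $ i}"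
      by (intro IntI UN_I[of "z - y"] UN_I[of y]) auto
  next
    fix z :: "real^'m" assume "z \<in> (\<Union>v\<in>{v. \<forall>i. 0 \<le> v $ i}. \<Union>y\<in>Y. {v + y}) \<inter> {z. \<forall>i. z $ i \<le> r $ i}"
    then obtain v y where "\<forall>i. 0 \<le> v $ i" "y \<in> Y" "z = v + y" "\<forall>i. z $ i \<le> r $ i" by blast
    then show "z \<in> (\<Union>y\<in>Y. {z. (\<forall>i. y $ i \<le> z $ i) \<and> (\<forall>i. z $ i \<le> r $ i)})"
      by (intro UN_I[of y]) auto
  qed
  moreover have "closed {v :: real^'m. \<forall>i. 0 \<le> v $ i}" "closed {z :: real^'m. \<forall>i. z $ i \<le> r $ i}"
    by (intro closed_Collect_all closed_Collect_le continuous_intros)+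
  ultimately show ?thesis
    using closed_compact_sums[OF _ assms] by (simp add: closed_Int)
qed

lemma bounded_dominated_region:
  assumes "bounded Y"
  shows "bounded (dominated_region r Y)"
proof -
  obtain B where B: "\<And>y. y \<in> Y \<Longrightarrow> norm y \<le> B" using assms bounded_iff by blast
  have "dominated_region r Y \<subseteq> cbox (\<chi> i. - B) r"
  proof
    fix z assume "z \<in> dominated_region r Y"
    then obtain y where y: "y \<in> Y" "\<forall>i. y $ i \<le> z $ i" "\<forall>i. z $ i \<le> r $ i"
      unfolding dominated_region_def by blast
    have "- B \<le> y $ i" for i
      using B[OF y(1)] component_le_norm_cart[of y i] by auto
    then show "z \<in> cbox (\<chi> i. - B) r" using y by (auto simp: mem_box_cart intro: order_trans)
  qed
  then show ?thesis using bounded_cbox bounded_subset by blast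
qed

lemma lmeasurable_dominated_region: "compact Y \<Longrightarrow> dominated_region r Y \<in> lmeasurable"
  by (intro bounded_set_imp_lmeasurable bounded_dominated_region compact_imp_bounded
      sets_completionI_sets) (auto intro: borel_closed closed_dominated_region)

lemma exists_pareto_dominating:
  fixes F :: "'a::topological_space \<Rightarrow> real^'m"
  assumes X: "compact X" and F: "continuous_on X F" and x: "x \<in> X"
  shows "\<exists>x'\<in>pareto_set F X. \<forall>i. F x' $ i \<le> F x $ i"
proof -
  define K where "K = X \<inter> F -` {y. \<forall>i. y $ i \<le> F x $ i}"
  have "closed {y :: real^'m. \<forall>i. y $ i \<le> F x $ i}"
    by (intro closed_Collect_all closed_Collect_le continuous_intros)
  then have "closedin (top_of_set X) K"
    unfolding K_def by (rule continuous_closedin_preimage[OF F])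
  then have "compact K" using X closedin_compact by blast
  moreover have "x \<in> K" unfolding K_def using x by simp
  moreover have "continuous_on K (\<lambda>x. \<Sum>i\<in>UNIV. F x $ i)"
    using continuous_on_subset[OF F] unfolding K_def by (intro continuous_intros) auto
  ultimately obtain x' where x': "x' \<in> K" and min: "\<And>y. y \<in> K \<Longrightarrow> (\<Sum>i\<in>UNIV. F x' $ i) \<le> (\<Sum>i\<in>UNIV. F y $ i)"
    using continuous_attains_inf[of K] by blast
  have "x' \<in> pareto_set F X"
    unfolding pareto_set_def
  proof safe
    show "x' \<in> X" using x' unfolding K_def by blast
    fix y assume "y \<in> X" "pareto_dom (F y) (F x')"
    then have le: "\<forall>i. F y $ i \<le> F x' $ i" and lt: "\<exists>j. F y $ j < F x' $ j"
      unfolding pareto_dom_def by auto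
    have "y \<in> K" using \<open>y \<in> X\<close> x' le unfolding K_def by (auto intro: order_trans)
    moreover have "(\<Sum>i\<in>UNIV. F y $ i) < (\<Sum>i\<in>UNIV. F x' $ i)"
      using le lt by (intro sum_strict_mono_ex1) auto
    ultimately show False using min by fastforce
  qed
  then show ?thesis using x' unfolding K_def by blast
qed

lemma dominated_region_pareto_set:
  fixes F :: "'a::topological_space \<Rightarrow> real^'m"
  assumes "compact X" and "continuous_on X F"
  shows "dominated_region r (F ` pareto_set F X) = dominated_region r (F ` X)"
proof
  show "dominated_region r (F ` pareto_set F X) \<subseteq> dominated_region r (F ` X)"
    by (intro dominated_region_mono image_mono) (auto simp: pareto_set_def)
  show "dominated_region r (F ` X) \<subseteq> dominated_region r (F ` pareto_set F X)"
  proof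
    fix z assume "z \<in> dominated_region r (F ` X)"
    then obtain x where x: "x \<in> X" "\<forall>i. F x $ i \<le> z $ i" "\<forall>i. z $ i \<le> r $ i"
      unfolding dominated_region_def by blast
    obtain x' where "x' \<in> pareto_set F X" "\<forall>i. F x' $ i \<le> F x $ i"
      using exists_pareto_dominating[OF assms x(1)] by blast
    then show "z \<in> dominated_region r (F ` pareto_set F X)"
      using x unfolding dominated_region_def by (blast intro: order_trans)
  qed
qed

lemma card_mult_measure_le_if_disjoint_translates:
  fixes E K :: "'a::euclidean_space set" and a :: "nat \<Rightarrow> 'a"
  assumes E: "E \<in> lmeasurable" and K: "K \<in> lmeasurable"
    and inside: "\<And>k. k < N \<Longrightarrow> (+) (a k) ` E \<subseteq> K"
    and disjoint: "disjoint_family_on (\<lambda>k. (+) (a k) ` E) {..<N}"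
  shows "real N * measure lebesgue E \<le> measure lebesgue K"
proof -
  have T: "(+) (a k) ` E \<in> lmeasurable" for k
    using E by (rule measurable_translation)
  have "measure lebesgue (\<Union>k<N. (+) (a k) ` E) = (\<Sum>k<N. measure lebesgue ((+) (a k) ` E))"
  proof (rule measure_finite_Union[OF _ _ disjoint])
    show "(\<lambda>k. (+) (a k) ` E) ` {..<N} \<subseteq> sets lebesgue" using fmeasurableD[OF T] by blast
    show "emeasure lebesgue ((+) (a k) ` E) \<noteq> \<infinity>" for k
      using fmeasurableD2[OF T] by simp
  qed simp
  then have "real N * measure lebesgue E = measure lebesgue (\<Union>k<N. (+) (a k) ` E)"
    by (simp add: measure_translation)
  also have "\<dots> \<le> measure lebesgue K"
    using inside fmeasurableD[OF T] by (intro measure_mono_fmeasurable[OF _ _ K]) blast+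
  finally show ?thesis .
qed

lemma null_sets_if_translates_disjoint:
  fixes E :: "'a::euclidean_space set" and v :: 'a
  assumes "E \<in> sets lebesgue" and "bounded E"
    and disjoint: "\<And>s t. s < t \<Longrightarrow> (+) (s *\<^sub>R v) ` E \<inter> (+) (t *\<^sub>R v) ` E = {}"
  shows "E \<in> null_sets lebesgue"
proof -
  have E: "E \<in> lmeasurable" using bounded_set_imp_lmeasurable assms(1,2) by blast
  obtain B where B: "\<And>e. e \<in> E \<Longrightarrow> norm e \<le> B" using \<open>bounded E\<close> bounded_iff by blast
  define K where "K = cball (0 :: 'a) (B + norm v)"
  have packing: "real N * measure lebesgue E \<le> measure lebesgue K" if "N > 0" for N
  proof (rule card_mult_measure_le_if_disjoint_translates[OF E, where a="\<lambda>k. (real k / real N) *\<^sub>R v"])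
    show "K \<in> lmeasurable" unfolding K_def by (rule lmeasurable_cball)
    show "(+) ((real k / real N) *\<^sub>R v) ` E \<subseteq> K" if "k < N" for k
    proof -
      have "(real k / real N) * norm v \<le> norm v"
        using that by (intro mult_left_le_one_le) auto
      then show ?thesis
        using B norm_triangle_ineq[of "(real k / real N) *\<^sub>R v"] unfolding K_def
        by (force intro: order_trans)
    qed
    show "disjoint_family_on (\<lambda>k. (+) ((real k / real N) *\<^sub>R v) ` E) {..<N}"
      unfolding disjoint_family_on_def
    proof (intro ballI impI)
      fix k l :: nat assume "k \<noteq> l"
      then have "real k / real N < real l / real N \<or> real l / real N < real k / real N"
        using \<open>N > 0\<close> by (cases "k < l") (auto simp: divide_strict_right_mono)
      then show "(+) ((real k / real N) *\<^sub>R v) ` E \<inter> (+) ((real l / real N) *\<^sub>R v) ` E = {}"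
        using disjoint by blast
    qed
  qed
  have "measure lebesgue E = 0"
  proof (rule ccontr)
    assume "measure lebesgue E \<noteq> 0"
    then have "measure lebesgue E > 0" using measure_nonneg[of lebesgue E] by linarith
    then obtain N where N: "measure lebesgue K < real N * measure lebesgue E"
      using reals_Archimedean3 by blast
    then have "N > 0" using measure_nonneg[of lebesgue K] by (cases N) auto
    with N packing[OF \<open>N > 0\<close>] show False by linarith
  qed
  then show ?thesis
    using E by (auto simp: null_sets_def emeasure_eq_measure2)
qed

lemma open_Collect_all_less:
  fixes f g :: "'a::topological_space \<Rightarrow> real^'m"
  assumes "continuous_on UNIV f" and "continuous_on UNIV g"
  shows "open {x. \<forall>i. f x $ i < g x $ i}"
proof -
  have "{x. \<forall>i. f x $ i < g x $ i} = (\<Inter>i. {x. f x $ i < g x $ i})" by blast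
  then show ?thesis
    using assms by (auto intro!: open_Collect_less continuous_on_component)
qed

lemma null_sets_dominated_region_boundary:
  fixes Y :: "(real^'m) set"
  assumes "compact Y"
  shows "dominated_region r Y - {z. \<exists>y\<in>Y. \<forall>i. y $ i < z $ i} \<in> null_sets lebesgue"
  \<comment> \<open>Shifting a dominated point by a positive multiple of (1, ..., 1) makes it strictly dominated.\<close>
proof (rule null_sets_if_translates_disjoint[where v="\<chi> i. 1"])
  let ?E = "dominated_region r Y - {z. \<exists>y\<in>Y. \<forall>i. y $ i < z $ i}"
  have "{z. \<exists>y\<in>Y. \<forall>i. y $ i < z $ i} = (\<Union>y\<in>Y. {z. \<forall>i. y $ i < z $ i})" by blast
  then have "open {z. \<exists>y\<in>Y. \<forall>i. y $ i < z $ i}"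
    by (auto intro!: open_Collect_all_less continuous_on_id)
  then show "?E \<in> sets lebesgue"
    using closed_dominated_region[OF assms] by (intro sets_completionI_sets) auto
  show "bounded ?E"
    using bounded_dominated_region[OF compact_imp_bounded[OF assms]] bounded_subset by blast
  fix s t :: real assume "s < t"
  show "(+) (s *\<^sub>R (\<chi> i. 1)) ` ?E \<inter> (+) (t *\<^sub>R (\<chi> i. 1)) ` ?E = {}" (is "?L = {}")
  proof (rule ccontr)
    assume "?L \<noteq> {}"
    then obtain e1 e2 where e: "e1 \<in> ?E" "e2 \<in> ?E" "s *\<^sub>R (\<chi> i. 1) + e1 = t *\<^sub>R (\<chi> i. 1) + e2"
      by blast
    then have e1: "e1 $ i = e2 $ i + (t - s)" for i
      by (auto simp: vec_eq_iff algebra_simps)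
    obtain y where "y \<in> Y" "\<forall>i. y $ i \<le> e2 $ i"
      using e(2) unfolding dominated_region_def by blast
    then have "\<forall>i. y $ i < e1 $ i" using \<open>s < t\<close> e1 by (auto intro: order.strict_trans1)
    with \<open>y \<in> Y\<close> e(1) show False by blast
  qed
qed

lemma dominated_region_dense_subset:
  fixes F :: "'a::metric_space \<Rightarrow> real^'m"
  assumes F: "continuous_on X F" and "P \<subseteq> X" and dense: "X \<subseteq> closure P"
  shows "dominated_region r (F ` X) \<inter> {z. \<exists>y\<in>F ` X. \<forall>i. y $ i < z $ i}
    \<subseteq> dominated_region r (F ` P)"
proof
  fix z assume z: "z \<in> dominated_region r (F ` X) \<inter> {z. \<exists>y\<in>F ` X. \<forall>i. y $ i < z $ i}"
  then obtain x where x: "x \<in> X" "\<forall>i. F x $ i < z $ i" and z_le: "\<forall>i. z $ i \<le> r $ i"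
    unfolding dominated_region_def by blast
  have "open {w :: real^'m. \<forall>i. w $ i < z $ i}"
    by (intro open_Collect_all_less continuous_on_id continuous_on_const)
  then obtain \<delta> where "\<delta> > 0" and \<delta>: "ball (F x) \<delta> \<subseteq> {w. \<forall>i. w $ i < z $ i}"
    using x(2) open_contains_ball by blast
  obtain d where "d > 0" and d: "\<And>x'. x' \<in> X \<Longrightarrow> dist x' x < d \<Longrightarrow> dist (F x') (F x) < \<delta>"
    using F x(1) \<open>\<delta> > 0\<close> unfolding continuous_on_iff by blast
  obtain x' where "x' \<in> P" "dist x' x < d"
    using dense x(1) \<open>d > 0\<close> closure_approachable by blast
  then have "\<forall>i. F x' $ i < z $ i"
    using d \<open>P \<subseteq> X\<close> \<delta> by (auto simp: dist_commute subset_iff)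
  then show "z \<in> dominated_region r (F ` P)"
    using \<open>x' \<in> P\<close> z_le unfolding dominated_region_def by (blast intro: less_imp_le)
qed

lemma measure_dominated_region_dense_subset:
  fixes F :: "'a::metric_space \<Rightarrow> real^'m"
  assumes X: "compact X" and F: "continuous_on X F" and "P \<subseteq> X" and dense: "X \<subseteq> closure P"
    and P_meas: "dominated_region r (F ` P) \<in> sets lebesgue"
  shows "measure lebesgue (dominated_region r (F ` P)) = measure lebesgue (dominated_region r (F ` X))"
proof -
  let ?N = "dominated_region r (F ` X) - {z. \<exists>y\<in>F ` X. \<forall>i. y $ i < z $ i}"
  have "dominated_region r (F ` X) = dominated_region r (F ` P) \<union> ?N"
    using dominated_region_dense_subset[OF F \<open>P \<subseteq> X\<close> dense, of r]
      dominated_region_mono[OF image_mono[OF \<open>P \<subseteq> X\<close>], of r F] by blast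
  then have "measure lebesgue (dominated_region r (F ` X))
      = measure lebesgue (dominated_region r (F ` P) \<union> ?N)"
    by (rule arg_cong)
  also have "\<dots> = measure lebesgue (dominated_region r (F ` P))"
    using compact_continuous_image[OF F X]
    by (intro measure_Un_null_set P_meas null_sets_dominated_region_boundary)
  finally show ?thesis ..
qed

lemma hypervolume_tendsto:
  fixes F :: "'a::metric_space \<Rightarrow> real^'m" and S :: "nat \<Rightarrow> 'a set"
  assumes X: "compact X" and F: "continuous_on X F"
    and S_mono: "\<And>t. S t \<subseteq> S (Suc t)" and S_finite: "\<And>t. finite (S t)" and S_sub: "\<And>t. S t \<subseteq> X"
    and dense: "X \<subseteq> closure (\<Union>t. S t)"
  shows "(\<lambda>t. hypervolume r (F ` S t)) \<longlonglongrightarrow> hypervolume r (F ` X)"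
proof -
  define D where "D t = dominated_region r (F ` S t)" for t
  have D_lm: "D t \<in> lmeasurable" for t
    unfolding D_def using S_finite by (intro lmeasurable_dominated_region finite_imp_compact) auto
  have X_lm: "dominated_region r (F ` X) \<in> lmeasurable"
    using compact_continuous_image[OF F X] by (rule lmeasurable_dominated_region)
  have D_Union: "(\<Union>t. D t) = dominated_region r (F ` (\<Union>t. S t))"
    unfolding D_def image_UN dominated_region_UN ..
  have D_X: "(\<Union>t. D t) \<subseteq> dominated_region r (F ` X)"
    unfolding D_def using S_sub by (intro UN_least dominated_region_mono image_mono)
  have "(\<lambda>t. measure lebesgue (D t)) \<longlonglongrightarrow> measure lebesgue (\<Union>t. D t)"
  proof (rule Lim_measure_incseq)
    show "range D \<subseteq> sets lebesgue" using fmeasurableD[OF D_lm] by blast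
    show "incseq D"
      unfolding D_def using S_mono by (intro incseq_SucI dominated_region_mono image_mono)
    show "emeasure lebesgue (\<Union>(range D)) \<noteq> \<infinity>"
      using emeasure_mono[OF D_X fmeasurableD[OF X_lm]] fmeasurableD2[OF X_lm]
      by (auto simp: top_unique)
  qed
  moreover have "measure lebesgue (\<Union>t. D t) = measure lebesgue (dominated_region r (F ` X))"
  proof -
    have "(\<Union>t. D t) \<in> sets lebesgue"
      using fmeasurableD[OF D_lm] by (intro sets.countable_UN) blast
    then show ?thesis
      unfolding D_Union using S_sub by (intro measure_dominated_region_dense_subset[OF X F _ dense]) auto
  qed
  ultimately show ?thesis unfolding D_def hypervolume_eq_measure by simp
qed

lemma (in hyperrect_refinement) hypervolume_of_samples_tendsto:
  fixes F :: "'a \<Rightarrow> real^'m" and Sel :: "nat \<Rightarrow> nat set" and nb :: "nat \<Rightarrow> nat \<Rightarrow> nat"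
    and pt :: "nat \<Rightarrow> nat \<Rightarrow> nat \<Rightarrow> 'a" and S :: "nat \<Rightarrow> 'a set"
  assumes X: "compact X" and F: "continuous_on X F"
    and Sel: "\<And>t. Sel t \<subseteq> Lv t"
    and nb_pos: "\<And>t j. j \<in> Sel t \<Longrightarrow> 1 \<le> nb t j"
    and pt: "\<And>t j i. j \<in> Sel t \<Longrightarrow> i < nb t j \<Longrightarrow> pt t j i \<in> Reg j"
    and S_0: "finite (S 0)" "S 0 \<subseteq> X"
    and S_Suc: "\<And>t. S (Suc t) = S t \<union> {pt t j i | j i. j \<in> Sel t \<and> i < nb t j}"
    and selected: "\<And>k t. k \<in> Lv t \<Longrightarrow> \<exists>\<^sub>F s in sequentially. \<exists>j\<in>Sel s. Reg j \<subseteq> Reg k"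
    and split: "\<And>k t. k \<in> Lv t \<Longrightarrow> (\<exists>\<^sub>F s in sequentially. \<exists>j\<in>Sel s. Reg j \<subseteq> Reg k)
      \<Longrightarrow> (\<exists>\<^sub>F s in sequentially. \<exists>j\<in>Lv s. Reg j \<subseteq> Reg k \<and> j \<notin> Lv (Suc s))"
    and shrink: "\<And>t j l. j \<in> Lv t \<Longrightarrow> j \<notin> Lv (Suc t) \<Longrightarrow> l \<in> Lv (Suc t) \<Longrightarrow> Reg l \<subseteq> Reg j
      \<Longrightarrow> diameter (Reg l) < diameter (Reg j)"
    and nested_diameter_tendsto_0: "\<And>R :: nat \<Rightarrow> nat. (\<forall>n. \<exists>t. R n \<in> Lv t)
      \<Longrightarrow> (\<forall>n. Reg (R (Suc n)) \<subset> Reg (R n)) \<Longrightarrow> (\<lambda>n. diameter (Reg (R n))) \<longlonglongrightarrow> 0"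
  shows "(\<lambda>t. hypervolume r (F ` S t)) \<longlonglongrightarrow> hypervolume r (F ` X)"
proof (rule hypervolume_tendsto[OF X F])
  have new_samples: "{pt t j i | j i. j \<in> Sel t \<and> i < nb t j} = (\<lambda>(j, i). pt t j i) ` (SIGMA j:Sel t. {..<nb t j})"
    for t by auto
  have "finite (Sel t)" for t using finite_subset[OF Sel finite_leaves] .
  then show "finite (S t)" for t
    by (induction t) (use S_0 S_Suc new_samples in auto)
  show "S t \<subseteq> X" for t
  proof (induction t)
    case (Suc t)
    have "{pt t j i | j i. j \<in> Sel t \<and> i < nb t j} \<subseteq> X" using pt Sel leaf_subset by blast
    then show ?case using Suc.IH S_Suc[of t] by blast
  qed (use S_0 in simp)
  show "S t \<subseteq> S (Suc t)" for t using S_Suc by blast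
  show "X \<subseteq> closure (\<Union>t. S t)"
  proof (rule samples_dense)
    show "\<exists>k t. k \<in> Lv t \<and> x \<in> Reg k \<and> diameter (Reg k) < \<epsilon>" if "x \<in> X" "\<epsilon> > 0" for x \<epsilon>
      using leaf_eventually_removed[OF _ split[OF _ selected]] shrink nested_diameter_tendsto_0 that
      by (rule exists_small_leaf)
    show "\<exists>s. \<exists>j\<in>Sel s. Reg j \<subseteq> Reg k" if "k \<in> Lv t" for k t
      using frequently_ex[OF selected[OF that]] .
    show "\<exists>p\<in>S (Suc t). p \<in> Reg j" if "j \<in> Sel t" for t j
    proof
      have "pt t j 0 \<in> {pt t j i | j i. j \<in> Sel t \<and> i < nb t j}"
        using that nb_pos[OF that] by (intro CollectI exI[of _ j] exI[of _ 0]) simp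
      then show "pt t j 0 \<in> S (Suc t)" using S_Suc[of t] by blast
      show "pt t j 0 \<in> Reg j" using pt[OF that] nb_pos[OF that] by simp
    qed
  qed
qed

theorem corollary1:
  fixes a b :: "'a::euclidean_space"
    and F :: "'a \<Rightarrow> real^'m"
    and r :: "real^'m"
    and M :: "'w measure"
    and Fs H :: "nat \<Rightarrow> 'w measure"
    and Reg :: "nat \<Rightarrow> 'w \<Rightarrow> 'a set"
    and Lv Sel :: "nat \<Rightarrow> 'w \<Rightarrow> nat set"
    and \<pi> :: "nat \<Rightarrow> nat \<Rightarrow> 'w \<Rightarrow> real"
    and nb :: "nat \<Rightarrow> nat \<Rightarrow> 'w \<Rightarrow> nat"
    and pt :: "nat \<Rightarrow> nat \<Rightarrow> nat \<Rightarrow> 'w \<Rightarrow> 'a"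
    and S :: "nat \<Rightarrow> 'w \<Rightarrow> 'a set"
    and \<eta> :: real
  assumes X_nondeg: "box a b \<noteq> {}"
    and ref_point: "\<forall>x\<in>cbox a b. pareto_dom (F x) r"
    and prob: "prob_space M"
    and filtration: "\<forall>t. subalgebra M (Fs t) \<and> subalgebra M (H t)
        \<and> sets (Fs t) \<subseteq> sets (H t) \<and> sets (H t) \<subseteq> sets (Fs (Suc t))"
    and partition: "\<forall>\<omega>\<in>space M. \<forall>t.
        finite (Lv t \<omega>)
        \<and> (\<forall>k\<in>Lv t \<omega>. hyperrect (Reg k \<omega>))
        \<and> (\<Union>k\<in>Lv t \<omega>. Reg k \<omega>) = cbox a b
        \<and> (\<forall>k\<in>Lv t \<omega>. \<forall>l\<in>Lv t \<omega>. k \<noteq> l \<longrightarrow> interior (Reg k \<omega>) \<inter> interior (Reg l \<omega>) = {})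
        \<and> (\<forall>l\<in>Lv (Suc t) \<omega>. l \<in> Lv t \<omega>
             \<or> (\<exists>k\<in>Lv t \<omega>. k \<notin> Lv (Suc t) \<omega> \<and> Reg l \<omega> \<subseteq> Reg k \<omega>))"
    and sampling: "\<forall>\<omega>\<in>space M. \<forall>t.
        Sel t \<omega> \<subseteq> Lv t \<omega>
        \<and> (\<forall>j\<in>Sel t \<omega>. 1 \<le> nb t j \<omega> \<and> (\<forall>i<nb t j \<omega>. pt t j i \<omega> \<in> Reg j \<omega>))"
    and samples: "\<forall>\<omega>\<in>space M. finite (S 0 \<omega>) \<and> S 0 \<omega> \<subseteq> cbox a b
        \<and> (\<forall>t. S (Suc t) \<omega> = S t \<omega> \<union> {pt t j i \<omega> | j i. j \<in> Sel t \<omega> \<and> i < nb t j \<omega>})"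
    and measurability: "\<forall>t k.
        {\<omega>\<in>space M. k \<in> Lv t \<omega>} \<in> sets (Fs t)
        \<and> {\<omega>\<in>space M. k \<in> Sel t \<omega>} \<in> sets (H t)
        \<and> {\<omega>\<in>space M. \<exists>j\<in>Sel t \<omega>. Reg j \<omega> \<subseteq> Reg k \<omega>} \<in> sets (H t)
        \<and> (\<forall>i. {\<omega>\<in>space M. i < nb t k \<omega>} \<in> sets (H t)
               \<and> pt t k i \<in> borel_measurable (Fs (Suc t)))"
    and selection_prob: "\<forall>k t. \<pi> k t \<in> borel_measurable (Fs t)
        \<and> (AE \<omega> in M. \<pi> k t \<omega> = real_cond_exp M (Fs t)
              (indicator {\<omega>\<in>space M. \<exists>j\<in>Sel t \<omega>. Reg j \<omega> \<subseteq> Reg k \<omega>}) \<omega>)"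
    and A1: "\<forall>i. \<exists>C. C-lipschitz_on (cbox a b) (\<lambda>x. F x $ i)"
    and A2: "AE \<omega> in M. \<forall>R :: nat \<Rightarrow> nat.
        (\<forall>n. \<exists>t. R n \<in> Lv t \<omega>) \<and> (\<forall>n. Reg (R (Suc n)) \<omega> \<subset> Reg (R n) \<omega>)
        \<longrightarrow> (\<lambda>n. diameter (Reg (R n) \<omega>)) \<longlonglongrightarrow> 0"
    and A3: "\<forall>k t0. AE \<omega> in M. k \<in> Lv t0 \<omega> \<longrightarrow> \<not> summable (\<lambda>t. \<pi> k (t0 + t) \<omega>)"
    and A4_split: "AE \<omega> in M. \<forall>k t0. k \<in> Lv t0 \<omega>
        \<and> (\<exists>\<^sub>F t in sequentially. \<exists>j\<in>Sel t \<omega>. Reg j \<omega> \<subseteq> Reg k \<omega>)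
        \<longrightarrow> (\<exists>\<^sub>F t in sequentially. \<exists>j\<in>Lv t \<omega>. Reg j \<omega> \<subseteq> Reg k \<omega> \<and> j \<notin> Lv (Suc t) \<omega>)"
    and A4_smaller: "AE \<omega> in M. \<forall>t j l. j \<in> Lv t \<omega> \<and> j \<notin> Lv (Suc t) \<omega>
        \<and> l \<in> Lv (Suc t) \<omega> \<and> Reg l \<omega> \<subseteq> Reg j \<omega>
        \<longrightarrow> diameter (Reg l \<omega>) < diameter (Reg j \<omega>)"
    and A5_pos: "\<eta> > 0"
    and A5: "\<forall>t j i c \<rho>. \<rho> > 0 \<longrightarrow> (AE \<omega> in M.
        j \<in> Sel t \<omega> \<and> i < nb t j \<omega> \<and> ball c \<rho> \<subseteq> Reg j \<omega> \<longrightarrow>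
        real_cond_exp M (H t) (indicator {\<omega>\<in>space M. pt t j i \<omega> \<in> ball c \<rho>}) \<omega>
          \<ge> \<eta> * measure lebesgue (ball c \<rho>) / measure lebesgue (Reg j \<omega>))"
  shows "AE \<omega> in M. (\<lambda>t. hypervolume r (F ` S t \<omega>))
            \<longlonglongrightarrow> hypervolume r (F ` pareto_set F (cbox a b))"
proof -
  have X: "compact (cbox a b)" by simp
  have F: "continuous_on (cbox a b) F" using A1 by (rule continuous_on_if_lipschitz_components)
  have "AE \<omega> in M. \<forall>k t0. k \<in> Lv t0 \<omega>
      \<longrightarrow> (\<exists>\<^sub>F t in sequentially. \<omega> \<in> {\<omega>\<in>space M. \<exists>j\<in>Sel t \<omega>. Reg j \<omega> \<subseteq> Reg k \<omega>})"
  proof (rule AE_frequently_if_cond_prob_tails_not_summable[OF prob, where G=Fs and p=\<pi>])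
    show "subalgebra M (Fs t)" for t using filtration by blast
    show "sets (Fs t) \<subseteq> sets (Fs (Suc t))" for t using filtration by (meson order_trans)
    show "{\<omega>\<in>space M. \<exists>j\<in>Sel t \<omega>. Reg j \<omega> \<subseteq> Reg k \<omega>} \<in> sets (Fs (Suc t))" for k t
      using measurability filtration by blast
  qed (use selection_prob A3 in blast)+
  then have selected: "AE \<omega> in M. \<forall>k t0. k \<in> Lv t0 \<omega>
      \<longrightarrow> (\<exists>\<^sub>F t in sequentially. \<exists>j\<in>Sel t \<omega>. Reg j \<omega> \<subseteq> Reg k \<omega>)"
    using AE_space by eventually_elim simp
  show ?thesis
    using selected A2 A4_split A4_smaller AE_space
  proof eventually_elim
    case (elim \<omega>)
    have \<omega>: "\<omega> \<in> space M" using elim(5) .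
    interpret hyperrect_refinement "cbox a b" "\<lambda>k. Reg k \<omega>" "\<lambda>t. Lv t \<omega>"
      using partition \<omega> by unfold_locales blast+
    have "(\<lambda>t. hypervolume r (F ` S t \<omega>)) \<longlonglongrightarrow> hypervolume r (F ` cbox a b)"
    proof (rule hypervolume_of_samples_tendsto[OF X F, where Sel="\<lambda>t. Sel t \<omega>"
          and nb="\<lambda>t j. nb t j \<omega>" and pt="\<lambda>t j i. pt t j i \<omega>" and S="\<lambda>t. S t \<omega>"])
      show "Sel t \<omega> \<subseteq> Lv t \<omega>" for t using sampling \<omega> by blast
      show "1 \<le> nb t j \<omega>" if "j \<in> Sel t \<omega>" for t j using sampling \<omega> that by blast
      show "pt t j i \<omega> \<in> Reg j \<omega>" if "j \<in> Sel t \<omega>" "i < nb t j \<omega>" for t j i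
        using sampling \<omega> that by blast
      show "finite (S 0 \<omega>)" "S 0 \<omega> \<subseteq> cbox a b" using samples \<omega> by blast+
      show "S (Suc t) \<omega> = S t \<omega> \<union> {pt t j i \<omega> | j i. j \<in> Sel t \<omega> \<and> i < nb t j \<omega>}" for t
        using samples \<omega> by blast
    qed (use elim(1-4) in blast)+
    then show ?case
      using dominated_region_pareto_set[OF X F] by (simp add: hypervolume_eq_measure)
  qed
qed

end
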